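(* Let $U$ be a domain in a hyperbolic 3-manifold and let $F:U\to N$ be a volume preserving 1-Lipschitz map into a hyperbolic 3-manifold $N$. Then $F$ is an isometric embedding. *)

theory Defs
  imports "HOL-Analysis.Analysis"
begin

definition H3 :: "(real^3) set" where
  "H3 = {x. x $ 3 > 0}"

definition hdist :: "real^3 \<Rightarrow> real^3 \<Rightarrow> real" where
  "hdist x y = arcosh (1 + (norm (x - y))^2 / (2 * (x $ 3) * (y $ 3)))"

definition curve_length :: "(real \<Rightarrow> 'a::metric_space) \<Rightarrow> ereal" where
  "curve_length g =
     (SUP ts \<in> {ts. sorted ts \<and> ts \<noteq> [] \<and> hd ts = 0 \<and> last ts = 1}.
        ereal (\<Sum>i < length ts - 1. dist (g (ts ! i)) (g (ts ! Suc i))))"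

definition length_metric :: "'a::metric_space itself \<Rightarrow> bool" where
  "length_metric _ \<longleftrightarrow>
     (\<forall>x y::'a. ereal (dist x y) =
        (INF g \<in> {g. continuous_on {0..1} g \<and> g 0 = x \<and> g 1 = y}. curve_length g))"

text \<open>A (complete, connected) hyperbolic 3-manifold, viewed as a metric space with its
  Riemannian distance: a complete length space every point of which has a metric ball
  isometric to a metric ball of the same radius in hyperbolic 3-space.\<close>
definition hyperbolic_3_manifold :: "'a::metric_space itself \<Rightarrow> bool" where
  "hyperbolic_3_manifold T \<longleftrightarrow>
     length_metric T \<and> complete (UNIV :: 'a set) \<and>
     (\<forall>x::'a. \<exists>r>0. \<exists>\<phi>.
        \<phi> ` ball x r = {q \<in> H3. hdist (\<phi> x) q < r} \<and> \<phi> x \<in> H3 \<and>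
        (\<forall>y\<in>ball x r. \<forall>z\<in>ball x r. hdist (\<phi> y) (\<phi> z) = dist y z))"

section \<open>Volume: 3-dimensional Hausdorff measure (Riemannian volume up to a constant)\<close>

definition hausdorff3_content :: "real \<Rightarrow> 'a::metric_space set \<Rightarrow> ennreal" where
  "hausdorff3_content \<delta> A =
     (INF C \<in> {C :: nat \<Rightarrow> 'a set. A \<subseteq> (\<Union>i. C i) \<and>
                  (\<forall>i. bounded (C i) \<and> diameter (C i) \<le> \<delta>)}.
        (\<Sum>i. ennreal ((diameter (C i)) ^ 3)))"

definition vol3 :: "'a::metric_space set \<Rightarrow> ennreal" where
  "vol3 A = (SUP \<delta> \<in> {0<..}. hausdorff3_content \<delta> A)"

definition domain :: "'a::metric_space set \<Rightarrow> bool" where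
  "domain U \<longleftrightarrow> open U \<and> connected U \<and> U \<noteq> {}"

definition volume_preserving_on :: "'a::metric_space set \<Rightarrow> ('a \<Rightarrow> 'b::metric_space) \<Rightarrow> bool" where
  "volume_preserving_on U F \<longleftrightarrow>
     (\<forall>E. E \<in> sets borel \<longrightarrow> E \<subseteq> U \<longrightarrow> vol3 (F ` E) = vol3 E)"

definition one_lipschitz_on :: "'a::metric_space set \<Rightarrow> ('a \<Rightarrow> 'b::metric_space) \<Rightarrow> bool" where
  "one_lipschitz_on U F \<longleftrightarrow> (\<forall>x\<in>U. \<forall>y\<in>U. dist (F x) (F y) \<le> dist x y)"

text \<open>Isometric embedding in the Riemannian sense: an injective local isometry.\<close>
definition isometric_embedding_on :: "'a::metric_space set \<Rightarrow> ('a \<Rightarrow> 'b::metric_space) \<Rightarrow> bool" where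
  "isometric_embedding_on U F \<longleftrightarrow> inj_on F U \<and>
     (\<forall>x\<in>U. \<exists>r>0. ball x r \<subseteq> U \<and>
        (\<forall>y\<in>ball x r. \<forall>z\<in>ball x r. dist (F y) (F z) = dist y z))"

end

theory Submission
  imports Defs
begin

text \<open>
  A metric ball in a hyperbolic 3-manifold is isometric to a hyperbolic ball of the same
  radius, so its 3-dimensional Hausdorff measure depends only on the radius, and for small
  radii it is positive and finite. Suppose the 1-Lipschitz map F shrank some distance:
  dist (F y) (F z) < dist y z, or F y = F z with y \<noteq> z. Then a ball around y of
  radius r and a small ball around z, separated from it, are both mapped into the ball of
  radius r around F y. Volume preservation and additivity of Hausdorff measure on separated
  sets give vol (ball) + vol (small ball) \<le> vol (ball), which is impossible.
\<close>

section \<open>Hausdorff measure\<close>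

lemma diameter_le_dist:
  fixes S :: "'a::metric_space set"
  assumes "0 \<le> d" "\<And>x y. x \<in> S \<Longrightarrow> y \<in> S \<Longrightarrow> dist x y \<le> d"
  shows "diameter S \<le> d"
  using assms by (auto simp: diameter_def intro!: cSUP_least)

lemma hausdorff3_content_le_cover:
  assumes "A \<subseteq> (\<Union>i. C i)" "\<And>i. bounded (C i)" "\<And>i. diameter (C i) \<le> \<delta>"
  shows "hausdorff3_content \<delta> A \<le> (\<Sum>i. ennreal ((diameter (C i)) ^ 3))"
  unfolding hausdorff3_content_def using assms by (intro INF_lower) auto

lemma hausdorff3_content_greatest:
  assumes "\<And>C. A \<subseteq> (\<Union>i. C i) \<Longrightarrow> (\<forall>i. bounded (C i) \<and> diameter (C i) \<le> \<delta>) \<Longrightarrow>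
      x \<le> (\<Sum>i. ennreal ((diameter (C i)) ^ 3))"
  shows "x \<le> hausdorff3_content \<delta> A"
  unfolding hausdorff3_content_def using assms by (intro INF_greatest) auto

lemma hausdorff3_content_mono:
  assumes "A \<subseteq> B" shows "hausdorff3_content \<delta> A \<le> hausdorff3_content \<delta> B"
  using assms by (intro hausdorff3_content_greatest hausdorff3_content_le_cover) auto

lemma hausdorff3_content_antimono:
  assumes "\<delta> \<le> \<delta>'" shows "hausdorff3_content \<delta>' A \<le> hausdorff3_content \<delta> A"
  using assms by (intro hausdorff3_content_greatest hausdorff3_content_le_cover) (auto intro: order_trans)

lemma hausdorff3_content_le_vol3:
  assumes "\<delta> > 0" shows "hausdorff3_content \<delta> A \<le> vol3 A"
  unfolding vol3_def using assms by (intro SUP_upper) auto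

lemma vol3_least:
  assumes "\<And>\<delta>. \<delta> > 0 \<Longrightarrow> hausdorff3_content \<delta> A \<le> x"
  shows "vol3 A \<le> x"
  unfolding vol3_def using assms by (intro SUP_least) auto

lemma vol3_mono:
  assumes "A \<subseteq> B" shows "vol3 A \<le> vol3 B"
  unfolding vol3_def using hausdorff3_content_mono[OF assms] by (intro SUP_mono) auto

lemma vol3_image_le_if_one_lipschitz:
  fixes G :: "'a::metric_space \<Rightarrow> 'b::metric_space"
  assumes lip: "one_lipschitz_on S G"
  shows "vol3 (G ` S) \<le> vol3 S"
proof (rule vol3_least)
  fix \<delta> :: real assume "\<delta> > 0"
  have "hausdorff3_content \<delta> (G ` S) \<le> hausdorff3_content \<delta> S"
  proof (rule hausdorff3_content_greatest)
    fix C :: "nat \<Rightarrow> 'a set"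
    assume cov: "S \<subseteq> (\<Union>i. C i)" and C: "\<forall>i. bounded (C i) \<and> diameter (C i) \<le> \<delta>"
    define C' where "C' i = G ` (C i \<inter> S)" for i
    have dist_le: "dist (G a) (G b) \<le> diameter (C i)" if "a \<in> C i \<inter> S" "b \<in> C i \<inter> S" for a b i
    proof -
      have "dist (G a) (G b) \<le> dist a b" using lip that unfolding one_lipschitz_on_def by blast
      also have "\<dots> \<le> diameter (C i)" using C that by (intro diameter_bounded_bound) auto
      finally show ?thesis .
    qed
    then have bounded_C': "bounded (C' i)" for i
      unfolding C'_def bounded_two_points by blast
    have diameter_C': "diameter (C' i) \<le> diameter (C i)" for i
    proof (rule diameter_le_dist)
      show "0 \<le> diameter (C i)" using C diameter_ge_0 by blast
      show "dist a b \<le> diameter (C i)" if "a \<in> C' i" "b \<in> C' i" for a b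
        using that dist_le unfolding C'_def by blast
    qed
    have "hausdorff3_content \<delta> (G ` S) \<le> (\<Sum>i. ennreal ((diameter (C' i)) ^ 3))"
    proof (rule hausdorff3_content_le_cover)
      show "G ` S \<subseteq> (\<Union>i. C' i)" using cov unfolding C'_def by blast
      show "diameter (C' i) \<le> \<delta>" for i using diameter_C'[of i] C by (meson order_trans)
    qed (rule bounded_C')
    also have "\<dots> \<le> (\<Sum>i. ennreal ((diameter (C i)) ^ 3))"
      using diameter_ge_0[OF bounded_C'] diameter_C'
      by (intro suminf_le summableI ennreal_leI power_mono) auto
    finally show "hausdorff3_content \<delta> (G ` S) \<le> (\<Sum>i. ennreal ((diameter (C i)) ^ 3))" .
  qed
  also have "\<dots> \<le> vol3 S" using hausdorff3_content_le_vol3 \<open>\<delta> > 0\<close> .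
  finally show "hausdorff3_content \<delta> (G ` S) \<le> vol3 S" .
qed

lemma vol3_isometric_image:
  fixes G :: "'a::metric_space \<Rightarrow> 'b::metric_space"
  assumes iso: "\<And>a b. a \<in> S \<Longrightarrow> b \<in> S \<Longrightarrow> dist (G a) (G b) = dist a b"
  shows "vol3 (G ` S) = vol3 S"
proof (rule antisym)
  show "vol3 (G ` S) \<le> vol3 S"
    using iso by (intro vol3_image_le_if_one_lipschitz) (simp add: one_lipschitz_on_def)
  have inj: "inj_on G S"
    using iso unfolding inj_on_def by (metis dist_eq_0_iff)
  have "one_lipschitz_on (G ` S) (inv_into S G)"
    using iso inj by (auto simp: one_lipschitz_on_def inv_into_f_f)
  from vol3_image_le_if_one_lipschitz[OF this] show "vol3 S \<le> vol3 (G ` S)"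
    using inj by simp
qed

lemma hausdorff3_content_Un_separated:
  assumes sep: "\<And>a b. a \<in> A \<Longrightarrow> b \<in> B \<Longrightarrow> \<eta> \<le> dist a b" and "\<delta> < \<eta>"
  shows "hausdorff3_content \<delta> A + hausdorff3_content \<delta> B \<le> hausdorff3_content \<delta> (A \<union> B)"
proof (rule hausdorff3_content_greatest)
  fix C :: "nat \<Rightarrow> 'a set"
  assume cov: "A \<union> B \<subseteq> (\<Union>i. C i)" and C: "\<forall>i. bounded (C i) \<and> diameter (C i) \<le> \<delta>"
  have "0 \<le> \<delta>" using C diameter_ge_0 by (meson order_trans)
  define CA where "CA i = (if C i \<inter> A = {} then {} else C i)" for i
  define CB where "CB i = (if C i \<inter> B = {} then {} else C i)" for i
  have "hausdorff3_content \<delta> A \<le> (\<Sum>i. ennreal ((diameter (CA i)) ^ 3))"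
    using cov C \<open>0 \<le> \<delta>\<close> unfolding CA_def by (intro hausdorff3_content_le_cover) (auto, blast)
  moreover have "hausdorff3_content \<delta> B \<le> (\<Sum>i. ennreal ((diameter (CB i)) ^ 3))"
    using cov C \<open>0 \<le> \<delta>\<close> unfolding CB_def by (intro hausdorff3_content_le_cover) (auto, blast)
  moreover have "(\<Sum>i. ennreal ((diameter (CA i)) ^ 3)) + (\<Sum>i. ennreal ((diameter (CB i)) ^ 3))
      = (\<Sum>i. ennreal ((diameter (CA i)) ^ 3) + ennreal ((diameter (CB i)) ^ 3))"
    by (rule suminf_add; rule summableI)
  moreover have "\<dots> \<le> (\<Sum>i. ennreal ((diameter (C i)) ^ 3))"
  proof (intro suminf_le summableI)
    fix i
    have "C i \<inter> A = {} \<or> C i \<inter> B = {}"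
    proof (rule ccontr)
      assume "\<not> ?thesis"
      then obtain a b where ab: "a \<in> C i" "a \<in> A" "b \<in> C i" "b \<in> B" by blast
      have "dist a b \<le> diameter (C i)" using C ab diameter_bounded_bound by blast
      then show False using sep[OF ab(2,4)] C \<open>\<delta> < \<eta>\<close> by (meson leD order_trans)
    qed
    then show "ennreal ((diameter (CA i)) ^ 3) + ennreal ((diameter (CB i)) ^ 3)
        \<le> ennreal ((diameter (C i)) ^ 3)"
      unfolding CA_def CB_def by auto
  qed
  ultimately show "hausdorff3_content \<delta> A + hausdorff3_content \<delta> B
      \<le> (\<Sum>i. ennreal ((diameter (C i)) ^ 3))"
    by (smt (verit) add_mono order_trans)
qed

lemma vol3_Un_separated:
  assumes sep: "\<And>a b. a \<in> A \<Longrightarrow> b \<in> B \<Longrightarrow> \<eta> \<le> dist a b" and "0 < \<eta>"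
  shows "vol3 A + vol3 B \<le> vol3 (A \<union> B)"
proof -
  have "hausdorff3_content d1 A + hausdorff3_content d2 B \<le> vol3 (A \<union> B)"
    if "d1 > 0" "d2 > 0" for d1 d2
  proof -
    define d where "d = min (min d1 d2) (\<eta>/2)"
    have d: "d > 0" "d \<le> d1" "d \<le> d2" "d < \<eta>" using that \<open>0 < \<eta>\<close> unfolding d_def by auto
    have "hausdorff3_content d1 A + hausdorff3_content d2 B
        \<le> hausdorff3_content d A + hausdorff3_content d B"
      using d by (intro add_mono hausdorff3_content_antimono)
    also have "\<dots> \<le> hausdorff3_content d (A \<union> B)" using hausdorff3_content_Un_separated[OF sep d(4)] .
    also have "\<dots> \<le> vol3 (A \<union> B)" using hausdorff3_content_le_vol3 d(1) .
    finally show ?thesis .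
  qed
  then have "(SUP d1\<in>{0<..}. SUP d2\<in>{0<..}. hausdorff3_content d1 A + hausdorff3_content d2 B)
      \<le> vol3 (A \<union> B)"
    by (intro SUP_least) auto
  then show ?thesis unfolding vol3_def
    by (simp add: ennreal_SUP_add_left[symmetric] ennreal_SUP_add_right[symmetric])
qed

section \<open>Comparison with coordinates in \<open>\<real>\<^sup>3\<close>\<close>

lemma emeasure_lborel_cube_cart:
  fixes c :: "real^3"
  assumes "t \<ge> 0"
  shows "emeasure lborel (cbox (\<chi> j. c$j - t) (\<chi> j. c$j + t)) = ennreal ((2*t)^3)"
proof -
  let ?B = "cbox (\<chi> j. c$j - t) (\<chi> j. c$j + t)"
  have "c \<in> ?B" using assms by (auto simp: mem_box_cart)
  then have ne: "?B \<noteq> {}" by blast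
  have "emeasure lborel ?B = ennreal (measure lborel ?B)"
    using emeasure_lborel_cbox_finite[of "\<chi> j. c$j - t" "\<chi> j. c$j + t"]
    by (intro emeasure_eq_ennreal_measure) auto
  also have "measure lborel ?B = (\<Prod>i\<in>UNIV. (\<chi> j. c$j + t) $ i - (\<chi> j. c$j - t) $ i)"
    using content_cbox_cart[OF ne] by simp
  also have "\<dots> = (2*t)^3" by (simp add: prod_constant)
  finally show ?thesis .
qed

lemma norm_le_cart3:
  fixes v :: "real^3"
  assumes "\<And>i. \<bar>v$i\<bar> \<le> e"
  shows "norm v \<le> 3 * e"
proof -
  have "norm v \<le> (\<Sum>i\<in>UNIV. \<bar>v$i\<bar>)" by (rule norm_le_l1_cart)
  also have "\<dots> \<le> 3 * e" using assms[of 1] assms[of 2] assms[of 3] by (simp add: sum_3)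
  finally show ?thesis .
qed

lemma lborel_le_hausdorff3_content_lipschitz:
  fixes \<phi> :: "'a::metric_space \<Rightarrow> real^3"
  assumes lip: "\<And>a b. a \<in> S \<Longrightarrow> b \<in> S \<Longrightarrow> norm (\<phi> a - \<phi> b) \<le> K * dist a b"
    and K: "K > 0" and Q: "Q \<in> sets lborel" "Q \<subseteq> \<phi> ` S"
  shows "ennreal (1 / (2*K)^3) * emeasure lborel Q \<le> hausdorff3_content \<delta> S"
proof (rule hausdorff3_content_greatest)
  fix C :: "nat \<Rightarrow> 'a set"
  assume cov: "S \<subseteq> (\<Union>i. C i)" and C: "\<forall>i. bounded (C i) \<and> diameter (C i) \<le> \<delta>"
  define d where "d i = diameter (C i)" for i
  have d0: "d i \<ge> 0" for i unfolding d_def using C diameter_ge_0 by blast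
  define s where "s i = (SOME s. s \<in> C i \<inter> S)" for i
  have s: "s i \<in> C i \<inter> S" if "C i \<inter> S \<noteq> {}" for i
    unfolding s_def using that by (rule some_in_eq[THEN iffD2])
  define Box where "Box i = (if C i \<inter> S = {} then {} else
      cbox (\<chi> j. \<phi> (s i) $j - K * d i) (\<chi> j. \<phi> (s i) $j + K * d i))" for i
  have "Q \<subseteq> (\<Union>i. Box i)"
  proof
    fix q assume "q \<in> Q"
    then obtain a i where a: "a \<in> S" "q = \<phi> a" "a \<in> C i" using Q cov by blast
    then have ne: "C i \<inter> S \<noteq> {}" by blast
    have "\<bar>(\<phi> a - \<phi> (s i))$j\<bar> \<le> K * d i" for j
    proof -
      have "\<bar>(\<phi> a - \<phi> (s i))$j\<bar> \<le> norm (\<phi> a - \<phi> (s i))" by (rule component_le_norm_cart)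
      also have "\<dots> \<le> K * dist a (s i)" using lip a(1) s[OF ne] by blast
      also have "\<dots> \<le> K * d i" unfolding d_def using K C a(3) s[OF ne]
        by (intro mult_left_mono diameter_bounded_bound) auto
      finally show ?thesis .
    qed
    then have "q \<in> Box i" unfolding Box_def using ne a
      by (auto simp: mem_box_cart abs_le_iff algebra_simps)
    then show "q \<in> (\<Union>i. Box i)" by blast
  qed
  then have "emeasure lborel Q \<le> emeasure lborel (\<Union>i. Box i)"
    by (intro emeasure_mono) (auto simp: Box_def)
  also have "\<dots> \<le> (\<Sum>i. emeasure lborel (Box i))"
    by (intro emeasure_subadditive_countably) (auto simp: Box_def)
  also have "\<dots> \<le> (\<Sum>i. ennreal ((2*K)^3) * ennreal (d i ^ 3))"
  proof (intro suminf_le summableI)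
    fix i
    have "emeasure lborel (Box i) \<le> ennreal ((2 * (K * d i))^3)"
      unfolding Box_def using emeasure_lborel_cube_cart K d0 by simp
    also have "\<dots> = ennreal ((2*K)^3) * ennreal (d i ^ 3)"
      using K d0 by (simp add: ennreal_mult[symmetric] power_mult_distrib mult_ac)
    finally show "emeasure lborel (Box i) \<le> ennreal ((2*K)^3) * ennreal (d i ^ 3)" .
  qed
  also have "\<dots> = ennreal ((2*K)^3) * (\<Sum>i. ennreal (d i ^ 3))" by (rule ennreal_suminf_cmult)
  finally have "ennreal (1 / (2*K)^3) * emeasure lborel Q
      \<le> ennreal (1 / (2*K)^3) * (ennreal ((2*K)^3) * (\<Sum>i. ennreal (d i ^ 3)))"
    by (intro mult_left_mono) auto
  also have "\<dots> = (\<Sum>i. ennreal (d i ^ 3))"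
    using K by (simp add: mult.assoc[symmetric] ennreal_mult[symmetric])
  finally show "ennreal (1 / (2*K)^3) * emeasure lborel Q \<le> (\<Sum>i. ennreal ((diameter (C i)) ^ 3))"
    unfolding d_def .
qed

lemma floor_index_bounds:
  fixes x :: real and n :: nat
  assumes "n \<ge> 1" "0 \<le> x" "x \<le> real n"
  defines "j \<equiv> min (n - 1) (nat \<lfloor>x\<rfloor>)"
  shows "real j \<le> x" "x \<le> real j + 1" "j < n"
proof -
  have f0: "\<lfloor>x\<rfloor> \<ge> 0" using assms by simp
  have f1: "real_of_int \<lfloor>x\<rfloor> \<le> x" "x < real_of_int \<lfloor>x\<rfloor> + 1" by linarith+
  have "real j \<le> x \<and> x \<le> real j + 1"
  proof (cases "nat \<lfloor>x\<rfloor> \<le> n - 1")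
    case True
    then have "real j = real_of_int \<lfloor>x\<rfloor>" unfolding j_def using f0 by simp
    then show ?thesis using f1 by simp
  next
    case False
    then have "real j = real n - 1" unfolding j_def using assms(1) by simp
    moreover have "real_of_int \<lfloor>x\<rfloor> \<ge> real n" using False f0 by linarith
    ultimately show ?thesis using f1 assms(3) by linarith
  qed
  then show "real j \<le> x" "x \<le> real j + 1" by auto
  show "j < n" unfolding j_def using assms(1) by simp
qed

lemma mixed_radix_less:
  fixes a b n N :: nat
  assumes "a < n" "b < N"
  shows "a + n * b < n * N"
proof -
  have "a + n * b < n * (b + 1)" using assms(1) by simp
  also have "n * (b + 1) \<le> n * N" using assms(2) by (intro mult_le_mono2) simp
  finally show ?thesis .
qed

lemma mixed_radix_inj:
  fixes n :: nat
  assumes "a < n" "a' < n" "a + n * b = a' + n * b'"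
  shows "a = a' \<and> b = b'"
proof -
  have "a = a'"
    using arg_cong[OF assms(3), of "\<lambda>k. k mod n"] assms(1,2) by simp
  then show ?thesis using assms by simp
qed

lemma cube_grid_index:
  fixes n :: nat and L :: real
  assumes n: "n \<ge> 1" and L: "L > 0"
  obtains idx :: "real^3 \<Rightarrow> nat"
  where "\<And>v. (\<And>k. \<bar>v$k\<bar> \<le> L) \<Longrightarrow> idx v < n^3"
    and "\<And>v w. (\<And>k. \<bar>v$k\<bar> \<le> L) \<Longrightarrow> (\<And>k. \<bar>w$k\<bar> \<le> L) \<Longrightarrow> idx v = idx w \<Longrightarrow>
           norm (v - w) \<le> 6 * L / n"
proof -
  define h where "h = 2 * L / real n"
  have h0: "h > 0" unfolding h_def using L n by simp
  define X where "X v k = ((v::real^3)$k + L) / h" for v k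
  define J where "J v k = min (n - 1) (nat \<lfloor>X v k\<rfloor>)" for v k
  define idx where "idx v = J v 1 + n * (J v 2 + n * J v 3)" for v
  have J: "real (J v k) \<le> X v k \<and> X v k \<le> real (J v k) + 1 \<and> J v k < n"
    if "\<And>k. \<bar>v$k\<bar> \<le> L" for v :: "real^3" and k
  proof -
    have "0 \<le> v$k + L" "v$k + L \<le> h * real n"
      using that[of k] n unfolding h_def by (auto simp: abs_le_iff)
    then have "0 \<le> X v k" "X v k \<le> real n"
      unfolding X_def using h0 by (auto simp: divide_le_eq mult.commute)
    then show ?thesis using floor_index_bounds[OF n] unfolding J_def by blast
  qed
  show thesis
  proof
    fix v :: "real^3" assume v: "\<And>k. \<bar>v$k\<bar> \<le> L"
    have "J v 2 + n * J v 3 < n * n" using J[OF v] by (intro mixed_radix_less) auto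
    then have "idx v < n * (n * n)" unfolding idx_def using J[OF v] by (intro mixed_radix_less) auto
    then show "idx v < n^3" by (simp add: power3_eq_cube)
  next
    fix v w :: "real^3" assume v: "\<And>k. \<bar>v$k\<bar> \<le> L" and w: "\<And>k. \<bar>w$k\<bar> \<le> L" and eq: "idx v = idx w"
    have "J v 1 = J w 1 \<and> J v 2 + n * J v 3 = J w 2 + n * J w 3"
      using mixed_radix_inj J[OF v] J[OF w] eq unfolding idx_def by blast
    moreover from this have "J v 2 = J w 2 \<and> J v 3 = J w 3"
      using mixed_radix_inj J[OF v] J[OF w] by blast
    ultimately have Jeq: "J v k = J w k" for k by (metis exhaust_3)
    have "\<bar>(v - w)$k\<bar> \<le> h" for k
    proof -
      have "\<bar>X v k - X w k\<bar> \<le> 1" using J[OF v, of k] J[OF w, of k] Jeq[of k] by auto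
      moreover have "X v k - X w k = (v - w)$k / h" unfolding X_def
        by (simp add: diff_divide_distrib[symmetric])
      ultimately show ?thesis using h0 by (simp add: divide_le_eq)
    qed
    then have "norm (v - w) \<le> 3 * h" by (rule norm_le_cart3)
    then show "norm (v - w) \<le> 6 * L / n" unfolding h_def by simp
  qed
qed

lemma hausdorff3_content_le_co_lipschitz:
  fixes \<phi> :: "'a::metric_space \<Rightarrow> real^3"
  assumes bound: "\<And>a. a \<in> S \<Longrightarrow> norm (\<phi> a) \<le> L" and L: "L > 0"
    and colip: "\<And>a b. a \<in> S \<Longrightarrow> b \<in> S \<Longrightarrow> dist a b \<le> K * norm (\<phi> a - \<phi> b)" and K: "K > 0"
    and \<delta>: "\<delta> > 0"
  shows "hausdorff3_content \<delta> S \<le> ennreal ((6 * K * L)^3)"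
proof -
  define n where "n = nat \<lceil>6 * K * L / \<delta>\<rceil> + 1"
  have n: "n \<ge> 1" unfolding n_def by simp
  have "6 * K * L / \<delta> \<le> real n" unfolding n_def by linarith
  then have "6 * K * L \<le> \<delta> * real n" using \<delta> by (simp add: divide_le_eq mult.commute)
  then have e\<delta>: "6 * K * L / n \<le> \<delta>" using n by (simp add: divide_le_eq mult.commute)
  have e0: "6 * K * L / n \<ge> 0" using K L by simp
  obtain idx :: "real^3 \<Rightarrow> nat" where idx_less: "\<And>v. (\<And>k. \<bar>v$k\<bar> \<le> L) \<Longrightarrow> idx v < n^3"
    and idx_eq: "\<And>v w. (\<And>k. \<bar>v$k\<bar> \<le> L) \<Longrightarrow> (\<And>k. \<bar>w$k\<bar> \<le> L) \<Longrightarrow> idx v = idx w \<Longrightarrow>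
           norm (v - w) \<le> 6 * L / n"
    using cube_grid_index[OF n L] by metis
  have coord: "\<bar>\<phi> a $ k\<bar> \<le> L" if "a \<in> S" for a k
    using component_le_norm_cart[of "\<phi> a" k] bound[OF that] by linarith
  define C where "C i = {a \<in> S. idx (\<phi> a) = i}" for i
  have diam: "dist a b \<le> 6 * K * L / n" if "a \<in> C i" "b \<in> C i" for a b i
  proof -
    have ab: "a \<in> S" "b \<in> S" "idx (\<phi> a) = idx (\<phi> b)" using that unfolding C_def by auto
    have "dist a b \<le> K * norm (\<phi> a - \<phi> b)" using colip ab by blast
    also have "\<dots> \<le> K * (6 * L / n)"
      using idx_eq[OF coord[OF ab(1)] coord[OF ab(2)] ab(3)] K by (intro mult_left_mono) auto
    finally show ?thesis by (simp add: mult_ac)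
  qed
  have Cb: "bounded (C i)" for i using diam unfolding bounded_two_points by blast
  have Cd: "diameter (C i) \<le> 6 * K * L / n" for i using diam e0 by (intro diameter_le_dist) auto
  have "idx (\<phi> a) < n^3" if "a \<in> S" for a using idx_less[OF coord[OF that]] .
  then have Cempty: "C i = {}" if "i \<notin> {..<n^3}" for i using that unfolding C_def by auto
  have "hausdorff3_content \<delta> S \<le> (\<Sum>i. ennreal ((diameter (C i))^3))"
  proof (rule hausdorff3_content_le_cover)
    show "S \<subseteq> (\<Union>i. C i)" unfolding C_def by blast
    show "diameter (C i) \<le> \<delta>" for i using Cd[of i] e\<delta> by linarith
  qed (rule Cb)
  also have "\<dots> = (\<Sum>i\<in>{..<n^3}. ennreal ((diameter (C i))^3))"
    using Cempty by (intro suminf_finite) auto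
  also have "\<dots> \<le> of_nat (card {..<n^3}) * ennreal ((6 * K * L / n)^3)"
    using Cd diameter_ge_0[OF Cb] by (intro sum_bounded_above ennreal_leI power_mono) auto
  also have "\<dots> = ennreal (real (n^3) * (6 * K * L / n)^3)"
    using e0 by (simp add: ennreal_of_nat_eq_real_of_nat ennreal_mult[symmetric])
  also have "real (n^3) * (6 * K * L / n)^3 = (6 * K * L)^3"
    using n by (simp add: power_divide)
  finally show ?thesis .
qed

lemma vol3_less_top_co_lipschitz:
  fixes \<phi> :: "'a::metric_space \<Rightarrow> real^3"
  assumes "bounded (\<phi> ` S)"
    and "\<And>a b. a \<in> S \<Longrightarrow> b \<in> S \<Longrightarrow> dist a b \<le> K * norm (\<phi> a - \<phi> b)" and "K > 0"
  shows "vol3 S < \<infinity>"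
proof -
  obtain L where "L > 0" "\<And>a. a \<in> S \<Longrightarrow> norm (\<phi> a) \<le> L"
    using assms(1) by (auto simp: bounded_pos)
  then have "vol3 S \<le> ennreal ((6 * K * L)^3)"
    using assms(2,3) by (intro vol3_least hausdorff3_content_le_co_lipschitz)
  also have "\<dots> < \<infinity>" by simp
  finally show ?thesis .
qed

section \<open>The upper half-space model\<close>

definition hdelta :: "real^3 \<Rightarrow> real^3 \<Rightarrow> real" where
  "hdelta x y = (norm (x - y))^2 / (2 * (x $ 3) * (y $ 3))"

lemma hdist_hdelta: "hdist x y = arcosh (1 + hdelta x y)"
  unfolding hdist_def hdelta_def by simp

lemma hdelta_nonneg: "x \<in> H3 \<Longrightarrow> y \<in> H3 \<Longrightarrow> hdelta x y \<ge> 0"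
  unfolding hdelta_def H3_def by auto

lemma hdist_commute: "hdist x y = hdist y x"
  unfolding hdist_def by (simp add: norm_minus_commute mult.commute mult.left_commute)

lemma hdist_self [simp]: "hdist x x = 0"
  unfolding hdist_def by simp

lemma hdist_nonneg: "x \<in> H3 \<Longrightarrow> y \<in> H3 \<Longrightarrow> hdist x y \<ge> 0"
  by (simp add: hdist_hdelta hdelta_nonneg)

lemma hdelta_le_if_hdist_le:
  assumes "x \<in> H3" "y \<in> H3" "hdist x y \<le> r"
  shows "hdelta x y \<le> cosh r - 1"
proof -
  have "1 + hdelta x y = cosh (hdist x y)"
    using hdelta_nonneg[OF assms(1,2)] by (simp add: hdist_hdelta)
  also have "\<dots> \<le> cosh r"
    using assms hdist_nonneg[OF assms(1,2)] by (subst cosh_real_nonneg_le_iff) auto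
  finally show ?thesis by simp
qed

text \<open>Scaling by \<open>q$3/p$3\<close> about the boundary point below \<open>p\<close>, followed by the horizontal
  translation taking \<open>p\<close> to \<open>q\<close>.\<close>
definition hmove :: "real^3 \<Rightarrow> real^3 \<Rightarrow> real^3 \<Rightarrow> real^3" where
  "hmove p q v = (\<chi> i. if i = 3 then (q$3/p$3) * v$i else (q$3/p$3) * (v$i - p$i) + q$i)"

lemma hmove_diff: "hmove p q v - hmove p q w = (q$3/p$3) *\<^sub>R (v - w)"
  unfolding hmove_def by (auto simp: vec_eq_iff right_diff_distrib)

lemma hmove_3: "hmove p q v $ 3 = (q$3/p$3) * v$3"
  unfolding hmove_def by simp

lemma hmove_center: "p \<in> H3 \<Longrightarrow> hmove p q p = q"
  unfolding hmove_def H3_def by (auto simp: vec_eq_iff)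

lemma hmove_H3: "p \<in> H3 \<Longrightarrow> q \<in> H3 \<Longrightarrow> v \<in> H3 \<Longrightarrow> hmove p q v \<in> H3"
  unfolding H3_def by (simp add: hmove_3)

lemma hmove_inverse: "p \<in> H3 \<Longrightarrow> q \<in> H3 \<Longrightarrow> hmove q p (hmove p q v) = v"
  unfolding hmove_def H3_def by (auto simp: vec_eq_iff)

lemma hdelta_hmove:
  assumes "p \<in> H3" "q \<in> H3"
  shows "hdelta (hmove p q a) (hmove p q b) = hdelta a b"
proof -
  define l where "l = q$3/p$3"
  have l: "l > 0" using assms unfolding l_def H3_def by auto
  have "hdelta (hmove p q a) (hmove p q b) = (l * norm (a - b))^2 / (2 * (l * a$3) * (l * b$3))"
    unfolding hdelta_def hmove_diff hmove_3 l_def[symmetric] using l by simp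
  also have "\<dots> = (l^2 * (norm (a - b))^2) / (l^2 * (2 * a$3 * b$3))"
    by (simp add: power_mult_distrib power2_eq_square mult_ac)
  also have "\<dots> = hdelta a b" unfolding hdelta_def using l by simp
  finally show ?thesis .
qed

lemma hdist_hmove: "p \<in> H3 \<Longrightarrow> q \<in> H3 \<Longrightarrow> hdist (hmove p q a) (hmove p q b) = hdist a b"
  by (simp add: hdist_hdelta hdelta_hmove)

lemma hmove_image_radial_set:
  assumes "p \<in> H3" "q \<in> H3"
  shows "hmove p q ` {w \<in> H3. P (hdist p w)} = {w \<in> H3. P (hdist q w)}"
proof
  show "hmove p q ` {w \<in> H3. P (hdist p w)} \<subseteq> {w \<in> H3. P (hdist q w)}"
  proof (rule image_subsetI)
    fix w assume w: "w \<in> {w \<in> H3. P (hdist p w)}"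
    have "hdist q (hmove p q w) = hdist p w"
      using hdist_hmove[OF assms, of p w] hmove_center[OF assms(1)] by simp
    then show "hmove p q w \<in> {w \<in> H3. P (hdist q w)}" using w assms hmove_H3 by auto
  qed
  show "{w \<in> H3. P (hdist q w)} \<subseteq> hmove p q ` {w \<in> H3. P (hdist p w)}"
  proof
    fix w assume w: "w \<in> {w \<in> H3. P (hdist q w)}"
    have "hmove q p w \<in> H3" using w assms hmove_H3 by auto
    moreover have "hdist p (hmove q p w) = hdist q w"
      using hdist_hmove[OF assms(2,1), of q w] hmove_center[OF assms(2)] by simp
    moreover have "hmove p q (hmove q p w) = w" using hmove_inverse[OF assms(2,1)] .
    ultimately show "w \<in> hmove p q ` {w \<in> H3. P (hdist p w)}" using w
      by (metis (mono_tags, lifting) image_eqI mem_Collect_eq)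
  qed
qed

lemma arcosh_one_plus_le:
  assumes "u \<ge> 0"
  shows "arcosh (1 + u) \<le> 2 * u + sqrt (2 * u)"
proof -
  have "arcosh (1 + u) = ln (1 + (u + sqrt ((1 + u)^2 - 1)))"
    using assms by (simp add: arcosh_real_def add.assoc)
  also have "\<dots> \<le> u + sqrt ((1 + u)^2 - 1)"
  proof (intro ln_add_one_self_le_self)
    have "(1 + u)^2 - 1 \<ge> 0" using assms by (simp add: power2_eq_square algebra_simps)
    then show "0 \<le> u + sqrt ((1 + u)^2 - 1)" using assms by simp
  qed
  also have "sqrt ((1 + u)^2 - 1) = sqrt (u^2 + 2 * u)" by (simp add: power2_eq_square algebra_simps)
  also have "\<dots> \<le> sqrt (u^2) + sqrt (2 * u)" using assms by (intro sqrt_add_le_add_sqrt) auto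
  also have "sqrt (u^2) = u" using assms by simp
  finally show ?thesis by simp
qed

lemma arcosh_one_plus_ge:
  assumes "u \<ge> 0"
  shows "sqrt (2 * u) / (1 + sqrt (2 * u)) \<le> arcosh (1 + u)"
proof -
  define s where "s = sqrt (2 * u)"
  have s0: "s \<ge> 0" unfolding s_def using assms by simp
  have "ln (1 / (1 + s)) \<le> 1 / (1 + s) - 1" using s0 by (intro ln_le_minus_one) auto
  then have "s / (1 + s) \<le> ln (1 + s)" using s0 by (simp add: ln_div field_simps)
  also have "ln (1 + s) \<le> ln (1 + u + sqrt ((1 + u)^2 - 1))"
  proof -
    have "s \<le> sqrt ((1 + u)^2 - 1)" unfolding s_def using assms
      by (intro real_sqrt_le_mono) (simp add: power2_eq_square algebra_simps)
    then show ?thesis using s0 assms by (subst ln_le_cancel_iff) auto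
  qed
  also have "\<dots> = arcosh (1 + u)" using assms by (simp add: arcosh_real_def)
  finally show ?thesis unfolding s_def .
qed

lemma hball_bounds:
  assumes p: "p \<in> H3" and q: "q \<in> H3" and h: "hdist p q \<le> r"
  defines "c \<equiv> cosh r - 1"
  shows "norm (p - q) \<le> (2*c+1) * p$3" "q$3 \<ge> p$3 / (2 + 8*c)" "q$3 \<le> (2*c+2) * p$3" "c \<ge> 0"
proof -
  have p3: "p$3 > 0" and q3: "q$3 > 0" using p q unfolding H3_def by auto
  show c0: "c \<ge> 0" unfolding c_def using cosh_real_ge_1[of r] by simp
  define D where "D = norm (p - q)"
  have D0: "D \<ge> 0" unfolding D_def by simp
  have "hdelta p q \<le> c" using hdelta_le_if_hdist_le[OF p q h] unfolding c_def .
  then have D2: "D^2 \<le> 2 * c * p$3 * q$3"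
    unfolding hdelta_def D_def using p3 q3 by (simp add: divide_le_eq mult_ac)
  have q3D: "q$3 \<le> p$3 + D" "p$3 - q$3 \<le> D"
    using component_le_norm_cart[of "p - q" 3] unfolding D_def by auto
  have D3: "D^2 \<le> 2 * c * p$3 * (p$3 + D)"
    using D2 mult_left_mono[OF q3D(1), of "2 * c * p$3"] c0 p3 by simp
  have "D \<le> (2*c+1) * p$3"
  proof (rule ccontr)
    assume "\<not> ?thesis"
    then have gt: "D > (2*c+1) * p$3" by simp
    have "0 < (2*c+1) * p$3" using p3 c0 by simp
    then have "((2*c+1) * p$3) * D < D * D" using gt by (intro mult_strict_right_mono) auto
    moreover have "p$3 * ((2*c+1) * p$3) \<le> p$3 * D" using gt p3 by (intro mult_left_mono) auto
    moreover have "2*c*p$3*p$3 \<le> p$3 * ((2*c+1) * p$3)" using p3 by (simp add: algebra_simps)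
    moreover have "p$3 * p$3 > 0" using p3 by simp
    ultimately have "2 * c * p$3 * (p$3 + D) < D * D" by (simp add: algebra_simps)
    then show False using D3 by (simp add: power2_eq_square)
  qed
  then show "norm (p - q) \<le> (2*c+1) * p$3" unfolding D_def .
  then show "q$3 \<le> (2*c+2) * p$3" using q3D(1) unfolding D_def by (simp add: algebra_simps)
  show "q$3 \<ge> p$3 / (2 + 8*c)"
  proof (cases "q$3 \<ge> p$3 / 2")
    case True
    have "p$3/(2+8*c) \<le> p$3/2" using p3 c0 by (intro divide_left_mono) auto
    then show ?thesis using True by linarith
  next
    case False
    then have "(p$3/2)^2 \<le> (p$3 - q$3)^2" using p3 by (intro power_mono) auto
    also have "\<dots> \<le> D^2" using q3D(2) False p3 by (intro power_mono) auto
    also have "\<dots> \<le> 2 * c * p$3 * q$3" using D2 .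
    finally have "p$3 * p$3 \<le> 8 * c * q$3 * p$3" by (simp add: power2_eq_square field_simps)
    then have "p$3 \<le> (2 + 8*c) * q$3" using p3 q3 by (simp add: algebra_simps)
    then show ?thesis using c0 by (simp add: divide_le_eq mult_ac)
  qed
qed

lemma hdist_le_norm_diff:
  assumes a: "a$3 \<ge> m" and b: "b$3 \<ge> m" and m: "m > 0" and D: "norm (a - b) \<le> Dm"
  shows "hdist a b \<le> (Dm / m^2 + 1/m) * norm (a - b)"
proof -
  define D where "D = norm (a - b)"
  have D0: "D \<ge> 0" unfolding D_def by simp
  have a3: "a$3 > 0" and b3: "b$3 > 0" using a b m by auto
  have ab: "a$3 * b$3 \<ge> m^2" using a b m by (simp add: power2_eq_square mult_mono)
  have u0: "hdelta a b \<ge> 0" unfolding hdelta_def using a3 b3 by simp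
  have h1: "hdist a b \<le> 2 * hdelta a b + sqrt (2 * hdelta a b)" unfolding hdist_hdelta using arcosh_one_plus_le[OF u0] .
  have e: "2 * hdelta a b = D^2 / (a$3 * b$3)" unfolding hdelta_def D_def by simp
  have t0: "D^2 / (a$3 * b$3) \<le> D^2 / m^2" using ab m a3 b3 by (intro divide_left_mono) (auto intro: mult_pos_pos)
  have t1: "D^2 / m^2 \<le> (Dm / m^2) * D" using D0 D m unfolding D_def
    by (simp add: power2_eq_square divide_le_eq mult_right_mono)
  have t2: "sqrt (D^2 / (a$3 * b$3)) \<le> sqrt (D^2 / m^2)"
    using ab m a3 b3 by (intro real_sqrt_le_mono divide_left_mono) (auto intro: mult_pos_pos)
  have t3: "sqrt (D^2 / m^2) = D / m" using D0 m by (simp add: real_sqrt_divide)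
  have "hdist a b \<le> (Dm / m^2) * D + D / m" using h1 e t0 t1 t2 t3 arg_cong[OF e, of sqrt] by linarith
  then show ?thesis unfolding D_def by (simp add: algebra_simps)
qed

lemma norm_diff_le_hdist:
  assumes a: "a$3 \<ge> m" "a$3 \<le> M" and b: "b$3 \<ge> m" "b$3 \<le> M" and m: "m > 0" and D: "norm (a - b) \<le> Dm"
  shows "norm (a - b) \<le> M * (1 + Dm / m) * hdist a b"
proof -
  define D where "D = norm (a - b)"
  have D0: "D \<ge> 0" unfolding D_def by simp
  have a3: "a$3 > 0" and b3: "b$3 > 0" using a b m by auto
  have M0: "M > 0" using a m by simp
  have u0: "hdelta a b \<ge> 0" unfolding hdelta_def using a3 b3 by simp
  define s where "s = sqrt (2 * hdelta a b)"
  have s_eq: "s = D / sqrt (a$3 * b$3)"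
    unfolding s_def hdelta_def D_def using a3 b3 by (simp add: real_sqrt_divide)
  have abM: "a$3 * b$3 \<le> M^2" using a b a3 b3 by (simp add: power2_eq_square mult_mono)
  have abm: "a$3 * b$3 \<ge> m^2" using a b m by (simp add: power2_eq_square mult_mono)
  have sM: "s \<ge> D / M"
  proof -
    have "sqrt (a$3 * b$3) \<le> M" using abM M0 by (metis real_sqrt_le_iff real_sqrt_abs abs_of_pos)
    then show ?thesis unfolding s_eq using D0 a3 b3 M0 by (intro divide_left_mono) (auto intro: mult_pos_pos)
  qed
  have sm: "s \<le> Dm / m"
  proof -
    have "sqrt (a$3 * b$3) \<ge> m" using abm m by (metis real_sqrt_le_iff real_sqrt_abs abs_of_pos)
    then have "s \<le> D / m" unfolding s_eq using D0 m a3 b3 by (intro divide_left_mono) (auto intro: mult_pos_pos)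
    also have "\<dots> \<le> Dm / m" using D m unfolding D_def by (simp add: divide_right_mono)
    finally show ?thesis .
  qed
  have s0: "s \<ge> 0" unfolding s_def using u0 by simp
  have "s / (1 + s) \<le> hdist a b" unfolding hdist_hdelta s_def using arcosh_one_plus_ge[OF u0] .
  moreover have "(D / M) / (1 + Dm / m) \<le> s / (1 + s)"
  proof -
    have "(D / M) / (1 + Dm / m) \<le> s / (1 + Dm/m)" using sM s0 sm
      by (intro divide_right_mono) auto
    also have "\<dots> \<le> s / (1 + s)" using s0 sm by (intro divide_left_mono) auto
    finally show ?thesis .
  qed
  ultimately have h: "D / (M * (1 + Dm / m)) \<le> hdist a b" by (simp add: divide_divide_eq_left)
  have "1 + Dm / m > 0" using sm s0 by linarith
  then have K: "M * (1 + Dm / m) > 0" using M0 by simp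
  have "D \<le> hdist a b * (M * (1 + Dm / m))" using h by (simp add: pos_divide_le_eq[OF K])
  then show ?thesis unfolding D_def by (simp add: mult_ac)
qed

lemma hdist_norm_bilipschitz:
  assumes p: "p \<in> H3"
  obtains K where "K > 0"
    and "\<And>a b. a \<in> H3 \<Longrightarrow> b \<in> H3 \<Longrightarrow> hdist p a \<le> r \<Longrightarrow> hdist p b \<le> r \<Longrightarrow>
           norm (a - b) \<le> K * hdist a b \<and> hdist a b \<le> K * norm (a - b)"
proof -
  define c where "c = cosh r - 1"
  define L where "L = (2*c+1) * p$3"
  define m where "m = p$3 / (2 + 8*c)"
  define M where "M = (2*c+2) * p$3"
  define K where "K = max (M * (1 + 2*L/m)) (2*L/m^2 + 1/m)"
  have p3: "p$3 > 0" using p unfolding H3_def by simp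
  have c0: "c \<ge> 0" unfolding c_def using cosh_real_ge_1[of r] by simp
  have m0: "m > 0" unfolding m_def using p3 c0 by simp
  have L0: "L \<ge> 0" unfolding L_def using p3 c0 by simp
  have K0: "K > 0" unfolding K_def using m0 L0 by (simp add: less_max_iff_disj add_nonneg_pos)
  have bounds: "norm (p - a) \<le> L \<and> a$3 \<ge> m \<and> a$3 \<le> M" if "a \<in> H3" "hdist p a \<le> r" for a
    using hball_bounds[OF p that] unfolding L_def m_def M_def c_def by simp
  have "norm (a - b) \<le> K * hdist a b \<and> hdist a b \<le> K * norm (a - b)"
    if a: "a \<in> H3" "hdist p a \<le> r" and b: "b \<in> H3" "hdist p b \<le> r" for a b
  proof
    have "norm (a - b) \<le> norm (p - b) + norm (p - a)"
      using norm_triangle_ineq4[of "p - b" "p - a"] by simp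
    then have D: "norm (a - b) \<le> 2 * L" using bounds[OF a] bounds[OF b] by simp
    have "norm (a - b) \<le> M * (1 + 2*L/m) * hdist a b"
      using bounds[OF a] bounds[OF b] m0 D by (intro norm_diff_le_hdist) auto
    also have "\<dots> \<le> K * hdist a b"
      unfolding K_def using hdist_nonneg[OF a(1) b(1)] by (intro mult_right_mono) auto
    finally show "norm (a - b) \<le> K * hdist a b" .
    have "hdist a b \<le> (2*L/m^2 + 1/m) * norm (a - b)"
      using bounds[OF a] bounds[OF b] m0 D by (intro hdist_le_norm_diff) auto
    also have "\<dots> \<le> K * norm (a - b)" unfolding K_def by (intro mult_right_mono) auto
    finally show "hdist a b \<le> K * norm (a - b)" .
  qed
  with K0 show ?thesis using that by blast
qed

lemma cube_subset_hball:
  assumes p: "p \<in> H3" and R: "R > 0"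
  obtains \<eta> where "\<eta> > 0" "cbox (\<chi> j. p$j - \<eta>) (\<chi> j. p$j + \<eta>) \<subseteq> {q \<in> H3. hdist p q < R}"
proof -
  have p3: "p$3 > 0" using p unfolding H3_def by simp
  define \<eta> where "\<eta> = min (p$3/2) (R * p$3 / 48)"
  have \<eta>0: "\<eta> > 0" unfolding \<eta>_def using p3 R by simp
  have "q \<in> H3 \<and> hdist p q < R" if q: "q \<in> cbox (\<chi> j. p$j - \<eta>) (\<chi> j. p$j + \<eta>)" for q
  proof
    have qi: "\<bar>(p - q)$i\<bar> \<le> \<eta>" for i
    proof -
      have "p$i - \<eta> \<le> q$i \<and> q$i \<le> p$i + \<eta>" using q unfolding mem_box_cart by simp
      then show ?thesis by (auto simp: abs_le_iff)
    qed
    then have nq: "norm (p - q) \<le> 3 * \<eta>" by (rule norm_le_cart3)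
    have "\<eta> \<le> p$3/2" unfolding \<eta>_def by simp
    then have q3: "q$3 \<ge> p$3/2" using qi[of 3] by (simp add: abs_le_iff)
    then show "q \<in> H3" unfolding H3_def using p3 by simp
    have "hdist p q \<le> (3*\<eta> / (p$3/2)^2 + 1/(p$3/2)) * norm (p - q)"
      using q3 p3 nq by (intro hdist_le_norm_diff) auto
    also have "\<dots> \<le> (8 / p$3) * (3 * \<eta>)"
    proof (rule mult_mono)
      have "3*\<eta> / (p$3/2)^2 \<le> 3*(p$3/2) / (p$3/2)^2"
        using p3 \<eta>_def by (intro divide_right_mono) auto
      also have "\<dots> = 6 / p$3" using p3 by (simp add: power2_eq_square field_simps)
      finally show "3*\<eta> / (p$3/2)^2 + 1/(p$3/2) \<le> 8 / p$3" by simp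
    qed (use nq p3 in auto)
    also have "\<dots> = 24 * \<eta> / p$3" by simp
    also have "\<dots> \<le> 24 * (R * p$3 / 48) / p$3" using p3
      by (intro divide_right_mono) (auto simp: \<eta>_def)
    also have "\<dots> < R" using p3 R by simp
    finally show "hdist p q < R" .
  qed
  with \<eta>0 show ?thesis using that by blast
qed

section \<open>Charts of hyperbolic 3-manifolds\<close>

definition chart :: "'a::metric_space \<Rightarrow> real \<Rightarrow> ('a \<Rightarrow> real^3) \<Rightarrow> bool" where
  "chart x R \<phi> \<longleftrightarrow> R > 0 \<and> \<phi> ` ball x R = {q \<in> H3. hdist (\<phi> x) q < R} \<and> \<phi> x \<in> H3 \<and>
     (\<forall>y\<in>ball x R. \<forall>z\<in>ball x R. hdist (\<phi> y) (\<phi> z) = dist y z)"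

lemma hyperbolic_3_manifold_chart:
  assumes "hyperbolic_3_manifold TYPE('a::metric_space)"
  obtains R \<phi> where "chart (x::'a) R \<phi>"
  using assms unfolding hyperbolic_3_manifold_def chart_def by blast

lemma chart_iso: "chart x R \<phi> \<Longrightarrow> y \<in> ball x R \<Longrightarrow> z \<in> ball x R \<Longrightarrow> hdist (\<phi> y) (\<phi> z) = dist y z"
  unfolding chart_def by blast

lemma chart_H3: "chart x R \<phi> \<Longrightarrow> y \<in> ball x R \<Longrightarrow> \<phi> y \<in> H3"
  unfolding chart_def by blast

lemma chart_pos: "chart x R \<phi> \<Longrightarrow> R > 0"
  unfolding chart_def by blast

lemma chart_center: "chart x R \<phi> \<Longrightarrow> x \<in> ball x R"
  unfolding chart_def by auto

lemma chart_surj: "chart x R \<phi> \<Longrightarrow> q \<in> H3 \<Longrightarrow> hdist (\<phi> x) q < R \<Longrightarrow> \<exists>a\<in>ball x R. \<phi> a = q"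
  unfolding chart_def by (metis (mono_tags, lifting) imageE mem_Collect_eq)

lemma chart_inj: "chart x R \<phi> \<Longrightarrow> inj_on \<phi> (ball x R)"
  unfolding inj_on_def using chart_iso by (metis dist_eq_0_iff hdist_self)

text \<open>The triangle inequality for \<open>hdist\<close> is inherited from the manifold, by moving the
  points into the range of a chart with \<open>hmove\<close>.\<close>
lemma hdist_triangle_chart:
  assumes ch: "chart x R \<phi>" and p: "p \<in> H3" and a: "a \<in> H3" and b: "b \<in> H3"
    and pa: "hdist p a < R" and pb: "hdist p b < R"
  shows "hdist a b \<le> hdist a p + hdist p b"
proof -
  have x3: "\<phi> x \<in> H3" using chart_H3[OF ch chart_center[OF ch]] .
  let ?T = "hmove p (\<phi> x)"
  have Tp: "?T p = \<phi> x" using hmove_center[OF p] .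
  have "hdist (\<phi> x) (?T a) < R" using pa hdist_hmove[OF p x3, of p a] Tp by simp
  then obtain a' where a': "a' \<in> ball x R" "\<phi> a' = ?T a"
    using chart_surj[OF ch hmove_H3[OF p x3 a]] by blast
  have "hdist (\<phi> x) (?T b) < R" using pb hdist_hmove[OF p x3, of p b] Tp by simp
  then obtain b' where b': "b' \<in> ball x R" "\<phi> b' = ?T b"
    using chart_surj[OF ch hmove_H3[OF p x3 b]] by blast
  have xx: "x \<in> ball x R" using chart_center[OF ch] .
  have "hdist a b = dist a' b'"
    using chart_iso[OF ch a'(1) b'(1)] a' b' hdist_hmove[OF p x3] by simp
  also have "\<dots> \<le> dist a' x + dist x b'" by (rule dist_triangle)
  also have "dist a' x = hdist a p"
    using chart_iso[OF ch a'(1) xx] a'(2) Tp hdist_hmove[OF p x3, of a p] by simp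
  also have "dist x b' = hdist p b"
    using chart_iso[OF ch xx b'(1)] b'(2) Tp hdist_hmove[OF p x3, of p b] by simp
  finally show ?thesis .
qed

lemma chart_subball:
  assumes ch: "chart x R \<phi>" and r: "0 < r" and y: "dist x y + r \<le> R"
  shows "chart y r \<phi>"
proof -
  have yb: "y \<in> ball x R" using y r by simp
  have sub: "ball y r \<subseteq> ball x R"
  proof
    fix a assume "a \<in> ball y r"
    then show "a \<in> ball x R" using y dist_triangle[of x a y] by simp
  qed
  have y3: "\<phi> y \<in> H3" using chart_H3[OF ch yb] .
  have x3: "\<phi> x \<in> H3" using chart_H3[OF ch chart_center[OF ch]] .
  have yx: "hdist (\<phi> y) (\<phi> x) = dist x y"
    using chart_iso[OF ch yb chart_center[OF ch]] by (simp add: dist_commute)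
  have "\<phi> ` ball y r = {q \<in> H3. hdist (\<phi> y) q < r}"
  proof
    show "\<phi> ` ball y r \<subseteq> {q \<in> H3. hdist (\<phi> y) q < r}"
      using sub chart_H3[OF ch] chart_iso[OF ch yb] by auto
    show "{q \<in> H3. hdist (\<phi> y) q < r} \<subseteq> \<phi> ` ball y r"
    proof
      fix q assume q: "q \<in> {q \<in> H3. hdist (\<phi> y) q < r}"
      have "r \<le> R" using y zero_le_dist[of x y] by linarith
      then have "hdist (\<phi> y) q < R" using q by auto
      then have "hdist (\<phi> x) q \<le> hdist (\<phi> x) (\<phi> y) + hdist (\<phi> y) q"
        using hdist_triangle_chart[OF ch y3 x3, of q] q yx y r by simp
      also have "\<dots> < R" using q yx y hdist_commute[of "\<phi> x" "\<phi> y"] by simp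
      finally obtain a where a: "a \<in> ball x R" "\<phi> a = q" using chart_surj[OF ch] q by blast
      have "dist y a < r" using chart_iso[OF ch yb a(1)] a q by simp
      then show "q \<in> \<phi> ` ball y r" using a by auto
    qed
  qed
  then show ?thesis unfolding chart_def using r y3 chart_iso[OF ch] sub by (auto simp: subset_iff)
qed

lemma chart_image_cball:
  assumes ch: "chart x R \<phi>" and r: "r < R"
  shows "\<phi> ` cball x r = {q \<in> H3. hdist (\<phi> x) q \<le> r}"
proof
  have cb: "cball x r \<subseteq> ball x R" using r by auto
  show "\<phi> ` cball x r \<subseteq> {q \<in> H3. hdist (\<phi> x) q \<le> r}"
    using cb chart_H3[OF ch] chart_iso[OF ch chart_center[OF ch]] by (auto simp: subset_iff)
  show "{q \<in> H3. hdist (\<phi> x) q \<le> r} \<subseteq> \<phi> ` cball x r"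
  proof
    fix q assume q: "q \<in> {q \<in> H3. hdist (\<phi> x) q \<le> r}"
    then obtain a where a: "a \<in> ball x R" "\<phi> a = q" using chart_surj[OF ch] r by force
    have "dist x a \<le> r" using chart_iso[OF ch chart_center[OF ch] a(1)] a q by simp
    then show "q \<in> \<phi> ` cball x r" using a by auto
  qed
qed

section \<open>Volume of small balls\<close>

lemma vol3_cball_le_charts:
  fixes y :: "'a::metric_space" and z :: "'b::metric_space"
  assumes ch1: "chart y R1 \<phi>" and ch2: "chart z R2 \<psi>" and r: "r < R1" "r < R2"
  shows "vol3 (cball y r) \<le> vol3 (cball z r)"
proof -
  have y3: "\<phi> y \<in> H3" using chart_H3[OF ch1 chart_center[OF ch1]] .
  have z3: "\<psi> z \<in> H3" using chart_H3[OF ch2 chart_center[OF ch2]] .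
  let ?T = "hmove (\<phi> y) (\<psi> z)"
  define G where "G a = inv_into (ball z R2) \<psi> (?T (\<phi> a))" for a
  have cb2: "cball z r \<subseteq> ball z R2" using r by auto
  have G: "G a \<in> cball z r \<and> \<psi> (G a) = ?T (\<phi> a)" if a: "a \<in> cball y r" for a
  proof -
    have "?T (\<phi> a) \<in> ?T ` {q \<in> H3. hdist (\<phi> y) q \<le> r}"
      using a chart_image_cball[OF ch1 r(1)] by blast
    also have "\<dots> = \<psi> ` cball z r"
      using hmove_image_radial_set[OF y3 z3, of "\<lambda>t. t \<le> r"] chart_image_cball[OF ch2 r(2)] by simp
    finally obtain b where b: "b \<in> cball z r" "\<psi> b = ?T (\<phi> a)" by (metis imageE)
    then have "G a = b" unfolding G_def using cb2 chart_inj[OF ch2] by (metis inv_into_f_f subsetD)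
    then show ?thesis using b by simp
  qed
  have "dist (G a) (G a') = dist a a'" if "a \<in> cball y r" "a' \<in> cball y r" for a a'
  proof -
    have "dist (G a) (G a') = hdist (\<psi> (G a)) (\<psi> (G a'))"
      using chart_iso[OF ch2] G that cb2 by (metis subsetD)
    also have "\<dots> = hdist (\<phi> a) (\<phi> a')" using G that hdist_hmove[OF y3 z3] by simp
    also have "\<dots> = dist a a'" using chart_iso[OF ch1] that r by auto
    finally show ?thesis .
  qed
  then have "vol3 (cball y r) = vol3 (G ` cball y r)" by (rule vol3_isometric_image[symmetric])
  also have "\<dots> \<le> vol3 (cball z r)" using G by (intro vol3_mono) blast
  finally show ?thesis .
qed

lemma vol3_cball_eq_charts:
  assumes "chart y R1 \<phi>" "chart z R2 \<psi>" "r < R1" "r < R2"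
  shows "vol3 (cball z r) = vol3 (cball y r)"
  using assms by (intro antisym vol3_cball_le_charts)

lemma vol3_ball_pos_chart:
  assumes ch: "chart x R \<phi>"
  shows "vol3 (ball x R) > 0"
proof -
  have R: "R > 0" using chart_pos[OF ch] .
  have p: "\<phi> x \<in> H3" using chart_H3[OF ch chart_center[OF ch]] .
  obtain K where K: "K > 0" and bilip: "\<And>a b. a \<in> H3 \<Longrightarrow> b \<in> H3 \<Longrightarrow>
      hdist (\<phi> x) a \<le> R \<Longrightarrow> hdist (\<phi> x) b \<le> R \<Longrightarrow>
      norm (a - b) \<le> K * hdist a b \<and> hdist a b \<le> K * norm (a - b)"
    using hdist_norm_bilipschitz[OF p, where r = R] by blast
  have lip: "norm (\<phi> a - \<phi> b) \<le> K * dist a b" if ab: "a \<in> ball x R" "b \<in> ball x R" for a b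
  proof -
    have "hdist (\<phi> x) (\<phi> a) \<le> R" "hdist (\<phi> x) (\<phi> b) \<le> R"
      using chart_iso[OF ch chart_center[OF ch] ab(1)] chart_iso[OF ch chart_center[OF ch] ab(2)] ab
      by auto
    then show ?thesis using bilip[OF chart_H3[OF ch ab(1)] chart_H3[OF ch ab(2)]] chart_iso[OF ch ab]
      by simp
  qed
  obtain \<eta> where \<eta>: "\<eta> > 0"
    and cube: "cbox (\<chi> j. \<phi> x $ j - \<eta>) (\<chi> j. \<phi> x $ j + \<eta>) \<subseteq> {q \<in> H3. hdist (\<phi> x) q < R}"
    by (rule cube_subset_hball[OF p R])
  have "0 < ennreal (1 / (2*K)^3) * ennreal ((2*\<eta>)^3)"
    using K \<eta> by (simp add: ennreal_zero_less_mult_iff)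
  also have "\<dots> = ennreal (1 / (2*K)^3) * emeasure lborel (cbox (\<chi> j. \<phi> x $ j - \<eta>) (\<chi> j. \<phi> x $ j + \<eta>))"
    using emeasure_lborel_cube_cart[of \<eta> "\<phi> x"] \<eta> by simp
  also have "\<dots> \<le> hausdorff3_content 1 (ball x R)"
    using cube ch unfolding chart_def by (intro lborel_le_hausdorff3_content_lipschitz[OF lip K]) auto
  also have "\<dots> \<le> vol3 (ball x R)" by (rule hausdorff3_content_le_vol3) simp
  finally show ?thesis .
qed

lemma vol3_cball_pos:
  assumes "hyperbolic_3_manifold TYPE('a::metric_space)" "\<epsilon> > 0"
  shows "vol3 (cball (z::'a) \<epsilon>) > 0"
proof -
  obtain R \<phi> where ch: "chart z R \<phi>" using hyperbolic_3_manifold_chart[OF assms(1)] by blast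
  have "chart z (min \<epsilon> R) \<phi>" using chart_subball[OF ch] chart_pos[OF ch] assms(2) by simp
  then have "0 < vol3 (ball z (min \<epsilon> R))" by (rule vol3_ball_pos_chart)
  also have "\<dots> \<le> vol3 (cball z \<epsilon>)" by (intro vol3_mono) auto
  finally show ?thesis .
qed

lemma vol3_cball_less_top_chart:
  assumes ch: "chart x R \<phi>" and r: "0 \<le> r" "r < R"
  shows "vol3 (cball x r) < \<infinity>"
proof -
  have p: "\<phi> x \<in> H3" using chart_H3[OF ch chart_center[OF ch]] .
  obtain K where K: "K > 0" and bilip: "\<And>a b. a \<in> H3 \<Longrightarrow> b \<in> H3 \<Longrightarrow>
      hdist (\<phi> x) a \<le> r \<Longrightarrow> hdist (\<phi> x) b \<le> r \<Longrightarrow>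
      norm (a - b) \<le> K * hdist a b \<and> hdist a b \<le> K * norm (a - b)"
    using hdist_norm_bilipschitz[OF p, where r = r] by blast
  have in_chart: "a \<in> ball x R \<and> \<phi> a \<in> H3 \<and> hdist (\<phi> x) (\<phi> a) \<le> r" if "a \<in> cball x r" for a
    using that r chart_H3[OF ch] chart_iso[OF ch chart_center[OF ch], of a] by auto
  show ?thesis
  proof (rule vol3_less_top_co_lipschitz[OF _ _ K])
    have "norm (\<phi> a - \<phi> x) \<le> K * r" if "a \<in> cball x r" for a
    proof -
      have "norm (\<phi> a - \<phi> x) \<le> K * hdist (\<phi> a) (\<phi> x)"
        using bilip[of "\<phi> a" "\<phi> x"] in_chart[OF that] p r by simp
      also have "\<dots> \<le> K * r"
        using in_chart[OF that] hdist_commute[of "\<phi> a"] K by (intro mult_left_mono) auto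
      finally show ?thesis .
    qed
    then have "\<phi> ` cball x r \<subseteq> cball (\<phi> x) (K * r)" by (auto simp: dist_norm norm_minus_commute)
    then show "bounded (\<phi> ` cball x r)" using bounded_cball bounded_subset by blast
    show "dist a b \<le> K * norm (\<phi> a - \<phi> b)" if "a \<in> cball x r" "b \<in> cball x r" for a b
      using bilip[of "\<phi> a" "\<phi> b"] in_chart[OF that(1)] in_chart[OF that(2)] chart_iso[OF ch] by simp
  qed
qed

lemma volume_preserving_dist_le:
  fixes F :: "'m::metric_space \<Rightarrow> 'n::metric_space"
  assumes hm: "hyperbolic_3_manifold TYPE('m)"
    and vp: "volume_preserving_on U F" and lip: "one_lipschitz_on U F"
    and ch1: "chart y R1 \<phi>" and ch2: "chart (F y) R2 \<psi>"
    and r: "0 \<le> r" "r < R1" "r < R2" and \<epsilon>: "0 < \<epsilon>"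
    and sub: "cball y r \<union> cball z \<epsilon> \<subseteq> U"
    and near: "dist (F y) (F z) + \<epsilon> \<le> r"
  shows "dist y z \<le> r + \<epsilon>"
proof (rule ccontr)
  assume "\<not> ?thesis"
  then have \<eta>: "0 < dist y z - r - \<epsilon>" by simp
  let ?A = "cball y r" and ?B = "cball z \<epsilon>"
  have sep: "dist y z - r - \<epsilon> \<le> dist a b" if "a \<in> ?A" "b \<in> ?B" for a b
  proof -
    have "dist y a \<le> r" "dist b z \<le> \<epsilon>" using that by (auto simp: dist_commute)
    then show ?thesis using dist_triangle[of y z a] dist_triangle[of a z b] by linarith
  qed
  have lipD: "dist (F a) (F b) \<le> dist a b" if "a \<in> U" "b \<in> U" for a b
    using lip that unfolding one_lipschitz_on_def by blast
  have yU: "y \<in> U" and zU: "z \<in> U" using sub r \<epsilon> by auto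
  have "F ` (?A \<union> ?B) \<subseteq> cball (F y) r"
  proof (rule image_subsetI)
    fix a assume a: "a \<in> ?A \<union> ?B"
    then have aU: "a \<in> U" using sub by blast
    show "F a \<in> cball (F y) r"
    proof (cases "a \<in> ?A")
      case True
      then show ?thesis using lipD[OF yU aU] by simp
    next
      case False
      then have "dist z a \<le> \<epsilon>" using a by simp
      then have "dist (F z) (F a) \<le> \<epsilon>" using lipD[OF zU aU] by linarith
      then show ?thesis using dist_triangle[of "F y" "F a" "F z"] near by simp
    qed
  qed
  have "?A \<union> ?B \<in> sets borel" by (intro borel_closed closed_Un closed_cball)
  then have vol3_image: "vol3 (F ` (?A \<union> ?B)) = vol3 (?A \<union> ?B)"
    using vp sub unfolding volume_preserving_on_def by blast
  have "vol3 ?A + vol3 ?B \<le> vol3 (?A \<union> ?B)" using sep \<eta> by (rule vol3_Un_separated)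
  also have "\<dots> = vol3 (F ` (?A \<union> ?B))" using vol3_image by simp
  also have "\<dots> \<le> vol3 (cball (F y) r)" by (rule vol3_mono) fact
  also have "\<dots> = vol3 ?A" by (rule vol3_cball_eq_charts[OF ch1 ch2 r(2,3)])
  finally have "vol3 ?A + vol3 ?B \<le> vol3 ?A + 0" by simp
  then have "vol3 ?B \<le> 0"
    using vol3_cball_less_top_chart[OF ch1 r(1,2)] by (auto simp: ennreal_add_left_cancel_le)
  moreover have "0 < vol3 ?B" by (rule vol3_cball_pos[OF hm \<epsilon>])
  ultimately show False by simp
qed

lemma inj_on_volume_preserving_one_lipschitz:
  fixes F :: "'m::metric_space \<Rightarrow> 'n::metric_space"
  assumes hm: "hyperbolic_3_manifold TYPE('m)" and hn: "hyperbolic_3_manifold TYPE('n)"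
    and "open U" and vp: "volume_preserving_on U F" and lip: "one_lipschitz_on U F"
  shows "inj_on F U"
proof (rule inj_onI, rule ccontr)
  fix y z assume yU: "y \<in> U" and zU: "z \<in> U" and Fyz: "F y = F z" and "y \<noteq> z"
  obtain R1 \<phi> where ch1: "chart y R1 \<phi>" using hyperbolic_3_manifold_chart[OF hm] .
  obtain R2 \<psi> where ch2: "chart (F y) R2 \<psi>" using hyperbolic_3_manifold_chart[OF hn] .
  obtain ey where ey: "ey > 0" "ball y ey \<subseteq> U" using \<open>open U\<close> yU open_contains_ball by blast
  obtain ez where ez: "ez > 0" "ball z ez \<subseteq> U" using \<open>open U\<close> zU open_contains_ball by blast
  define r where "r = min (min R1 R2) (min (min ey ez) (dist y z)) / 4"
  have r: "0 < r" "r < R1" "r < R2" "r < ey" "r < ez" "4 * r \<le> dist y z"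
    using chart_pos[OF ch1] chart_pos[OF ch2] ey ez \<open>y \<noteq> z\<close> unfolding r_def by auto
  have "cball y r \<subseteq> ball y ey" "cball z r \<subseteq> ball z ez" using r by auto
  then have "dist y z \<le> r + r"
    using ey ez r Fyz by (intro volume_preserving_dist_le[OF hm vp lip ch1 ch2]) auto
  then show False using r by linarith
qed

lemma locally_isometric_volume_preserving_one_lipschitz:
  fixes F :: "'m::metric_space \<Rightarrow> 'n::metric_space"
  assumes hm: "hyperbolic_3_manifold TYPE('m)" and hn: "hyperbolic_3_manifold TYPE('n)"
    and "open U" and vp: "volume_preserving_on U F" and lip: "one_lipschitz_on U F"
    and xU: "x \<in> U"
  shows "\<exists>\<rho>>0. ball x \<rho> \<subseteq> U \<and> (\<forall>y\<in>ball x \<rho>. \<forall>z\<in>ball x \<rho>. dist (F y) (F z) = dist y z)"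
proof -
  obtain R1 \<phi> where ch1: "chart x R1 \<phi>" using hyperbolic_3_manifold_chart[OF hm] .
  obtain R2 \<psi> where ch2: "chart (F x) R2 \<psi>" using hyperbolic_3_manifold_chart[OF hn] .
  obtain e where e: "e > 0" "ball x e \<subseteq> U" using \<open>open U\<close> xU open_contains_ball by blast
  define \<rho> where "\<rho> = min (min R1 R2) e / 8"
  have \<rho>: "\<rho> > 0" "8 * \<rho> \<le> R1" "8 * \<rho> \<le> R2" "8 * \<rho> \<le> e"
    using chart_pos[OF ch1] chart_pos[OF ch2] e unfolding \<rho>_def by auto
  have near_x: "a \<in> U" if "dist x a < 4 * \<rho>" for a using that \<rho> e by auto
  have lipD: "dist (F a) (F b) \<le> dist a b" if "a \<in> U" "b \<in> U" for a b
    using lip that unfolding one_lipschitz_on_def by blast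
  have "dist (F y) (F z) = dist y z" if y: "dist x y < \<rho>" and z: "dist x z < \<rho>" for y z
  proof -
    define s where "s = dist y z"
    define t where "t = dist (F y) (F z)"
    have yU: "y \<in> U" and zU: "z \<in> U" using near_x y z \<rho> by auto
    have ts: "t \<le> s" using lipD[OF yU zU] unfolding s_def t_def .
    have s2: "s < 2 * \<rho>" unfolding s_def using y z dist_triangle[of y z x] by (simp add: dist_commute)
    have "s \<le> t"
    proof (rule ccontr)
      assume "\<not> s \<le> t"
      define r where "r = (s + t) / 2"
      define \<epsilon> where "\<epsilon> = (s - t) / 4"
      have "0 \<le> t" unfolding t_def by simp
      then have r: "0 \<le> r" "r < 2 * \<rho>" and \<epsilon>: "0 < \<epsilon>" "\<epsilon> < \<rho>"
        using \<open>\<not> s \<le> t\<close> s2 unfolding r_def \<epsilon>_def by auto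
      have "t + \<epsilon> \<le> r" using \<open>\<not> s \<le> t\<close> unfolding r_def \<epsilon>_def by (simp add: field_simps)
      have ch1': "chart y (R1/2) \<phi>" using chart_subball[OF ch1] y \<rho> by simp
      have "dist (F x) (F y) < \<rho>" using lipD[OF xU yU] y by simp
      then have ch2': "chart (F y) (R2/2) \<psi>" using chart_subball[OF ch2] \<rho> by simp
      have "cball y r \<union> cball z \<epsilon> \<subseteq> U"
      proof
        fix a assume "a \<in> cball y r \<union> cball z \<epsilon>"
        then have "dist x a < 4 * \<rho>"
          using y z r \<epsilon> dist_triangle[of x a y] dist_triangle[of x a z] by auto
        then show "a \<in> U" by (rule near_x)
      qed
      then have "s \<le> r + \<epsilon>" unfolding s_def
        using r \<epsilon> \<rho> \<open>t + \<epsilon> \<le> r\<close> unfolding t_def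
        by (intro volume_preserving_dist_le[OF hm vp lip ch1' ch2']) auto
      then show False using \<open>\<not> s \<le> t\<close> unfolding r_def \<epsilon>_def by (simp add: field_simps)
    qed
    then show ?thesis using ts unfolding s_def t_def by linarith
  qed
  moreover have "ball x \<rho> \<subseteq> U" using near_x \<rho> by auto
  ultimately show ?thesis using \<rho> by auto
qed

theorem propositionA1:
  fixes U :: "'m::metric_space set" and F :: "'m \<Rightarrow> 'n::metric_space"
  assumes "hyperbolic_3_manifold TYPE('m)"
    and "hyperbolic_3_manifold TYPE('n)"
    and "domain U"
    and "volume_preserving_on U F"
    and "one_lipschitz_on U F"
  shows "isometric_embedding_on U F"
proof -
  have "open U" using assms(3) unfolding domain_def by blast
  then show ?thesis
    unfolding isometric_embedding_on_def
    using inj_on_volume_preserving_one_lipschitz[OF assms(1,2) _ assms(4,5)]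
      locally_isometric_volume_preserving_one_lipschitz[OF assms(1,2) _ assms(4,5)]
    by blast
qed

end
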